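(* Let $n \geq 2k \geq 4$ and let $\mathcal F, \mathcal G \subset \binom{[n]}{k}$ be non-trivial, cross-intersecting, initial families. For $P \subset [k+1]$ with $2 \leq |P| \leq k$ let $\mathcal F(P) = \{F \setminus P : F \in \mathcal F,\ F \cap [k+1] = P\}$, $\mathcal G(P) = \{G \setminus P : G \in \mathcal G,\ G \cap [k+1] = P\}$, and $$\alpha(P) = \frac{|\mathcal F(P)|}{\binom{n-k-1}{k-|P|}},\qquad \beta(P) = \frac{|\mathcal G(P)|}{\binom{n-k-1}{k-|P|}}.$$ Then for any disjoint $P, Q \subset [k+1]$ with $2 \le |P|,|Q| \le k$, $$\alpha(P) + \beta(Q) \leq 1.$$
   Context: Families are cross-intersecting if every member of one meets every member of the other; a non-empty family is non-trivial if the intersection of all its members is empty. For $k$-sets $A=\{x_1<\dots<x_k\}$, $B=\{y_1<\dots<y_k\}$, $A\prec B$ means $x_i\le y_i$ for all $i$; a family is initial if $A\prec B\in\mathcal F$ implies $A\in\mathcal F$. *)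

theory Defs
  imports Complex_Main
begin

definition ksets :: "nat \<Rightarrow> nat \<Rightarrow> nat set set" where
  "ksets n k = {A. A \<subseteq> {1..n} \<and> card A = k}"

definition cross_intersecting :: "nat set set \<Rightarrow> nat set set \<Rightarrow> bool" where
  "cross_intersecting F G \<longleftrightarrow> (\<forall>A\<in>F. \<forall>B\<in>G. A \<inter> B \<noteq> {})"

definition nontrivial :: "nat set set \<Rightarrow> bool" where
  "nontrivial F \<longleftrightarrow> F \<noteq> {} \<and> \<Inter>F = {}"

definition shift_prec :: "nat set \<Rightarrow> nat set \<Rightarrow> bool" where
  "shift_prec A B \<longleftrightarrow> card A = card B \<and>
     (\<forall>i<card A. sorted_list_of_set A ! i \<le> sorted_list_of_set B ! i)"

definition initial :: "nat \<Rightarrow> nat \<Rightarrow> nat set set \<Rightarrow> bool" where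
  "initial n k F \<longleftrightarrow> F \<subseteq> ksets n k \<and>
     (\<forall>A B. A \<in> ksets n k \<longrightarrow> shift_prec A B \<longrightarrow> B \<in> F \<longrightarrow> A \<in> F)"

definition restr :: "nat \<Rightarrow> nat set set \<Rightarrow> nat set \<Rightarrow> nat set set" where
  "restr k F P = (\<lambda>A. A - P) ` {A \<in> F. A \<inter> {1..k+1} = P}"

definition dens :: "nat \<Rightarrow> nat \<Rightarrow> nat set set \<Rightarrow> nat set \<Rightarrow> real" where
  "dens n k F P = real (card (restr k F P)) / real ((n - k - 1) choose (k - card P))"

end

theory Submission
  imports Defs
begin

text \<open>
  Write \<open>Y = {k+2..n}\<close>, \<open>a = k - |P|\<close>, \<open>b = k - |Q|\<close>. Since \<open>P \<inter> Q = {}\<close>, the traces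
  \<open>\<F>(P)\<close> and \<open>\<G>(Q)\<close> are cross-intersecting families of \<open>a\<close>- and \<open>b\<close>-subsets of \<open>Y\<close>,
  and \<open>\<alpha>(P)\<close>, \<open>\<beta>(Q)\<close> are their densities in \<open>Y\<close>.  If \<open>a + b \<le> |Y|\<close>, such densities
  always sum to at most 1: split both families at a point \<open>y \<in> Y\<close> and combine the
  inductive bounds for the three cross-intersecting pairs with Pascal's rule.

  If \<open>a + b > |Y|\<close>, pass to complements in \<open>Y\<close>; this needs that no \<open>S \<in> \<F>(P)\<close>,
  \<open>T \<in> \<G>(Q)\<close> cover \<open>Y\<close>.  Such a pair would come from \<open>A \<in> \<F>\<close>, \<open>B \<in> \<G>\<close> whose common
  elements all exceed \<open>k + 1\<close> and, as \<open>n \<ge> 2k\<close>, are no more than the free positions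
  \<open>[k+1] - (P \<union> Q)\<close>.  Shifting them down into these positions yields a member of the
  initial family \<open>\<F>\<close> disjoint from \<open>B\<close>.
\<close>

lemma card_le_sorted_list_of_set_nth:
  assumes "finite A" "i < card A"
  shows "Suc i \<le> card {z \<in> A. z \<le> sorted_list_of_set A ! i}"
proof -
  let ?xs = "sorted_list_of_set A"
  have mem: "?xs ! j \<in> A" if "j \<le> i" for j
    using that assms by (metis le_less_trans length_sorted_list_of_set nth_mem set_sorted_list_of_set)
  have "inj_on (\<lambda>j. ?xs ! j) {..i}"
    using assms by (auto simp: inj_on_def nth_eq_iff_index_eq)
  then have "Suc i = card ((\<lambda>j. ?xs ! j) ` {..i})"
    by (simp add: card_image)
  also have "\<dots> \<le> card {z \<in> A. z \<le> ?xs ! i}"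
    using assms mem by (intro card_mono) (auto intro!: sorted_nth_mono)
  finally show ?thesis .
qed

lemma card_less_sorted_list_of_set_nth:
  assumes "finite A" "i < card A"
  shows "card {z \<in> A. z < sorted_list_of_set A ! i} \<le> i"
proof -
  let ?xs = "sorted_list_of_set A"
  have "{z \<in> A. z < ?xs ! i} \<subseteq> (\<lambda>j. ?xs ! j) ` {..<i}"
  proof
    fix z assume z: "z \<in> {z \<in> A. z < ?xs ! i}"
    then have "z \<in> set ?xs"
      using assms(1) by simp
    then obtain j where j: "j < card A" "z = ?xs ! j"
      by (auto simp: in_set_conv_nth)
    have "j < i"
      using z j assms sorted_nth_mono[of ?xs i j] by (cases "i \<le> j") auto
    with j show "z \<in> (\<lambda>j. ?xs ! j) ` {..<i}"
      by auto
  qed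
  then have "card {z \<in> A. z < ?xs ! i} \<le> card ((\<lambda>j. ?xs ! j) ` {..<i})"
    by (intro card_mono) auto
  also have "\<dots> \<le> i"
    using card_image_le[of "{..<i}" "\<lambda>j. ?xs ! j"] by simp
  finally show ?thesis .
qed

lemma shift_prec_if_counts_le:
  assumes "finite A" "finite B" "card A = card B"
    and counts: "\<And>t. card {z \<in> B. z \<le> t} \<le> card {z \<in> A. z \<le> t}"
  shows "shift_prec A B"
  unfolding shift_prec_def
proof (intro conjI allI impI)
  fix i assume i: "i < card A"
  let ?x = "sorted_list_of_set A ! i" and ?y = "sorted_list_of_set B ! i"
  show "?x \<le> ?y"
  proof (rule ccontr)
    assume "\<not> ?x \<le> ?y"
    then have "card {z \<in> A. z \<le> ?y} \<le> card {z \<in> A. z < ?x}"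
      using assms(1) by (intro card_mono) auto
    also have "\<dots> \<le> i"
      using card_less_sorted_list_of_set_nth[OF assms(1) i] .
    finally have "card {z \<in> A. z \<le> ?y} \<le> i" .
    moreover have "Suc i \<le> card {z \<in> B. z \<le> ?y}"
      using card_le_sorted_list_of_set_nth[OF assms(2)] i assms(3) by simp
    ultimately show False
      using counts[of ?y] by simp
  qed
qed (fact assms)

lemma shift_prec_exchange:
  fixes C S T :: "nat set"
  assumes "finite C" "finite S" "finite T" "C \<inter> S = {}" "C \<inter> T = {}" "card S = card T"
    and less: "\<And>s t. s \<in> S \<Longrightarrow> t \<in> T \<Longrightarrow> s < t"
  shows "shift_prec (C \<union> S) (C \<union> T)"
proof (rule shift_prec_if_counts_le)
  show "card (C \<union> S) = card (C \<union> T)"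
    using assms by (simp add: card_Un_disjoint)
  fix u
  have "card {z \<in> T. z \<le> u} \<le> card {z \<in> S. z \<le> u}"
  proof (cases "\<exists>t \<in> T. t \<le> u")
    case True
    then have "{z \<in> S. z \<le> u} = S"
      using less by fastforce
    then show ?thesis
      using assms by (simp add: card_mono)
  next
    case False
    then have "{z \<in> T. z \<le> u} = {}"
      by auto
    then show ?thesis
      by (metis card.empty zero_le)
  qed
  moreover have "{z \<in> C \<union> X. z \<le> u} = {z \<in> C. z \<le> u} \<union> {z \<in> X. z \<le> u}" for X
    by auto
  ultimately show "card {z \<in> C \<union> T. z \<le> u} \<le> card {z \<in> C \<union> S. z \<le> u}"
    using assms by (simp add: card_Un_disjoint disjoint_iff)
qed (use assms in auto)

text \<open>
  Otherwise shifting the common elements of \<open>A\<close> and \<open>B\<close> down into \<open>{1..t} - (A \<union> B)\<close>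
  gives a member of \<open>F\<close> that misses \<open>B\<close>.
\<close>
lemma initial_cross_intersecting_card_Int:
  assumes "initial n k F" "cross_intersecting F G" "A \<in> F" "B \<in> G"
    and above: "\<And>x. x \<in> A \<inter> B \<Longrightarrow> t < x"
  shows "card ({1..t} - (A \<union> B)) < card (A \<inter> B)"
proof (rule ccontr)
  assume "\<not> ?thesis"
  then obtain R where R: "R \<subseteq> {1..t} - (A \<union> B)" "card R = card (A \<inter> B)" "finite R"
    by (meson not_less obtain_subset_with_card_n)
  have A: "A \<subseteq> {1..n}" "card A = k"
    using assms(1,3) by (auto simp: initial_def ksets_def)
  then have "finite A"
    using finite_subset by blast
  obtain d where "d \<in> A \<inter> B"
    using assms(2-4) by (auto simp: cross_intersecting_def)
  then have "t < n"
    using above A(1) by fastforce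
  have "shift_prec ((A - B) \<union> R) ((A - B) \<union> (A \<inter> B))"
    using R above \<open>finite A\<close> by (intro shift_prec_exchange) fastforce+
  moreover have "(A - B) \<union> (A \<inter> B) = A"
    by blast
  ultimately have "shift_prec ((A - B) \<union> R) A"
    by simp
  moreover have "(A - B) \<union> R \<subseteq> {1..n}"
    using A(1) R(1) \<open>t < n\<close> by auto
  ultimately have "(A - B) \<union> R \<in> ksets n k"
    using A(2) by (simp add: ksets_def shift_prec_def)
  then have "(A - B) \<union> R \<in> F"
    using assms(1,3) \<open>shift_prec ((A - B) \<union> R) A\<close> by (auto simp: initial_def)
  moreover have "((A - B) \<union> R) \<inter> B = {}"
    using R(1) by blast
  ultimately show False
    using assms(2,4) by (auto simp: cross_intersecting_def)
qed

definition subsets_of_card :: "'a set \<Rightarrow> nat \<Rightarrow> 'a set set" where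
  "subsets_of_card Y a = {S. S \<subseteq> Y \<and> card S = a}"

definition density :: "'a set \<Rightarrow> nat \<Rightarrow> 'a set set \<Rightarrow> real" where
  "density Y a A = real (card A) / real (card Y choose a)"

lemma finite_subsets_of_card: "finite Y \<Longrightarrow> finite (subsets_of_card Y a)"
  by (rule finite_subset[of _ "Pow Y"]) (auto simp: subsets_of_card_def)

lemma subsets_of_card_0: "finite Y \<Longrightarrow> subsets_of_card Y 0 = {{}}"
  by (auto simp: subsets_of_card_def dest: finite_subset)

lemma density_le_1:
  assumes "finite Y" "A \<subseteq> subsets_of_card Y a"
  shows "density Y a A \<le> 1"
proof -
  have "card A \<le> card (subsets_of_card Y a)"
    using assms finite_subsets_of_card by (blast intro: card_mono)
  also have "\<dots> = card Y choose a"
    using n_subsets[OF assms(1)] by (simp add: subsets_of_card_def)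
  finally show ?thesis
    by (cases "card Y choose a = 0") (auto simp: density_def divide_le_eq_1)
qed

lemma cross_intersecting_commute: "cross_intersecting A B \<longleftrightarrow> cross_intersecting B A"
  by (auto simp: cross_intersecting_def)

lemma cross_intersecting_density_0_le_1:
  assumes "finite Y" "A \<subseteq> subsets_of_card Y 0" "B \<subseteq> subsets_of_card Y b"
    and "cross_intersecting A B"
  shows "density Y 0 A + density Y b B \<le> 1"
proof -
  have "A = {} \<or> A = {{}}"
    using assms(2) subsets_of_card_0[OF assms(1)] by (simp add: subset_singleton_iff)
  then show ?thesis
  proof
    assume "A = {}"
    then show ?thesis
      using density_le_1[OF assms(1,3)] by (simp add: density_def)
  next
    assume "A = {{}}"
    then have "B = {}"
      using assms(4) unfolding cross_intersecting_def by blast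
    with \<open>A = {{}}\<close> show ?thesis
      by (simp add: density_def)
  qed
qed

definition deletion :: "'a \<Rightarrow> 'a set set \<Rightarrow> 'a set set" where
  "deletion y A = {S \<in> A. y \<notin> S}"

definition link :: "'a \<Rightarrow> 'a set set \<Rightarrow> 'a set set" where
  "link y A = (\<lambda>S. S - {y}) ` {S \<in> A. y \<in> S}"

lemma card_deletion_link:
  assumes "finite A"
  shows "card A = card (deletion y A) + card (link y A)"
proof -
  have "inj_on (\<lambda>S. S - {y}) {S \<in> A. y \<in> S}"
    by (auto simp: inj_on_def)
  then have "card (link y A) = card {S \<in> A. y \<in> S}"
    by (simp add: link_def card_image)
  moreover have "card A = card (deletion y A) + card {S \<in> A. y \<in> S}"
  proof -
    have "A = deletion y A \<union> {S \<in> A. y \<in> S}"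
      by (auto simp: deletion_def)
    also have "card \<dots> = card (deletion y A) + card {S \<in> A. y \<in> S}"
      using assms by (intro card_Un_disjoint) (auto simp: deletion_def)
    finally show ?thesis .
  qed
  ultimately show ?thesis
    by simp
qed

lemma deletion_subsets_of_card:
  "A \<subseteq> subsets_of_card (insert y Y) a \<Longrightarrow> deletion y A \<subseteq> subsets_of_card Y a"
  by (auto simp: deletion_def subsets_of_card_def)

lemma link_subsets_of_card:
  "finite Y \<Longrightarrow> A \<subseteq> subsets_of_card (insert y Y) a \<Longrightarrow> link y A \<subseteq> subsets_of_card Y (a - 1)"
  by (auto simp: link_def subsets_of_card_def dest: finite_subset)

lemma cross_intersecting_deletion_link:
  assumes "cross_intersecting A B"
  shows "cross_intersecting (deletion y A) (link y B)"
    and "cross_intersecting (link y A) (deletion y B)"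
    and "cross_intersecting (deletion y A) (deletion y B)"
  using assms by (auto simp: cross_intersecting_def deletion_def link_def)

lemma density_insert:
  assumes "finite Y" "y \<notin> Y" "finite A" "1 \<le> a" "a \<le> card Y"
  shows "real (card (insert y Y)) * density (insert y Y) a A
    = (real (card (insert y Y)) - real a) * density Y a (deletion y A)
      + real a * density Y (a - 1) (link y A)"
proof -
  define m where "m = card Y"
  define c where "c = real (Suc m choose a)"
  define c0 where "c0 = real (m choose a)"
  define c1 where "c1 = real (m choose (a - 1))"
  have pos: "c > 0" "c0 > 0" "c1 > 0"
    using assms(4,5) by (simp_all add: c_def c0_def c1_def m_def)
  have "(Suc m - a) * (Suc m choose a) = Suc m * (m choose a)"
    using binomial_absorb_comp[of "Suc m" a] by (simp only: diff_Suc_1)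
  then have "real (Suc m - a) * c = real (Suc m) * c0"
    unfolding c_def c0_def of_nat_mult[symmetric] by (rule arg_cong)
  then have w0: "(real (Suc m) - real a) / c0 = real (Suc m) / c"
    using pos assms(5) by (simp add: of_nat_diff m_def field_simps)
  have "a * (Suc m choose a) = Suc m * (m choose (a - 1))"
    using binomial_absorption[of "a - 1" "Suc m"] assms(4) by (simp del: binomial_Suc_Suc)
  then have "real a * c = real (Suc m) * c1"
    unfolding c_def c1_def of_nat_mult[symmetric] by (rule arg_cong)
  then have w1: "real a / c1 = real (Suc m) / c"
    using pos by (simp add: field_simps)
  have "real (card (insert y Y)) * density (insert y Y) a A
      = real (Suc m) / c * (real (card (deletion y A)) + real (card (link y A)))"
    using assms(1-3) card_deletion_link[OF assms(3), of y] by (simp add: density_def c_def m_def)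
  also have "\<dots> = (real (Suc m) - real a) / c0 * real (card (deletion y A))
      + real a / c1 * real (card (link y A))"
    by (simp only: w0 w1 distrib_left)
  also have "\<dots> = (real (card (insert y Y)) - real a) * density Y a (deletion y A)
      + real a * density Y (a - 1) (link y A)"
    using assms(1,2) by (simp add: density_def c0_def c1_def m_def)
  finally show ?thesis .
qed

lemma cross_intersecting_density_le_1:
  assumes "finite Y" "A \<subseteq> subsets_of_card Y a" "B \<subseteq> subsets_of_card Y b"
    and "cross_intersecting A B" "a + b \<le> card Y"
  shows "density Y a A + density Y b B \<le> 1"
  using assms
proof (induction Y arbitrary: A B a b rule: finite_induct)
  case empty
  then show ?case
    using cross_intersecting_density_0_le_1[of "{}" A B b] by simp
next
  case (insert y Y)
  consider "a = 0" | "b = 0" | "1 \<le> a" "1 \<le> b"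
    by linarith
  then show ?case
  proof cases
    case 1
    with insert show ?thesis
      using cross_intersecting_density_0_le_1[of "insert y Y" A B b] by simp
  next
    case 2
    with insert show ?thesis
      using cross_intersecting_density_0_le_1[of "insert y Y" B A a]
      by (simp add: cross_intersecting_commute add.commute)
  next
    case 3
    define M where "M = real (card (insert y Y))"
    define x0 where "x0 = density Y a (deletion y A)"
    define x1 where "x1 = density Y (a - 1) (link y A)"
    define y0 where "y0 = density Y b (deletion y B)"
    define y1 where "y1 = density Y (b - 1) (link y B)"
    have card: "card (insert y Y) = Suc (card Y)"
      using insert.hyps by simp
    note sub = deletion_subsets_of_card link_subsets_of_card[OF insert.hyps(1)]
    note ci = cross_intersecting_deletion_link[OF insert.prems(3), of y]
    have "finite A" "finite B"
      using insert.prems(1,2) finite_subsets_of_card[OF finite.insertI[OF insert.hyps(1)]]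
      by (auto intro: finite_subset)
    have "x0 + y1 \<le> 1"
      using insert.IH[OF sub(1)[OF insert.prems(1)] sub(2)[OF insert.prems(2)] ci(1)]
        insert.prems(4) card 3 by (simp add: x0_def y1_def)
    moreover have "x1 + y0 \<le> 1"
      using insert.IH[OF sub(2)[OF insert.prems(1)] sub(1)[OF insert.prems(2)] ci(2)]
        insert.prems(4) card 3 by (simp add: x1_def y0_def)
    moreover have "(M - a - b) * (x0 + y0) \<le> M - a - b"
    proof (cases "a + b \<le> card Y")
      case True
      then have "x0 + y0 \<le> 1"
        using insert.IH[OF sub(1)[OF insert.prems(1)] sub(1)[OF insert.prems(2)] ci(3)]
        by (simp add: x0_def y0_def)
      moreover have "0 \<le> M - a - b"
        using insert.prems(4) by (simp add: M_def)
      ultimately show ?thesis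
        by (simp add: mult_left_le)
    next
      case False
      then have "M - a - b = 0"
        using insert.prems(4) card by (simp add: M_def)
      then show ?thesis by simp
    qed
    moreover have "M * (density (insert y Y) a A + density (insert y Y) b B)
        = b * (x0 + y1) + a * (x1 + y0) + (M - a - b) * (x0 + y0)"
      using density_insert[OF insert.hyps \<open>finite A\<close>, of a]
        density_insert[OF insert.hyps \<open>finite B\<close>, of b] insert.prems(4) card 3
      by (simp add: M_def x0_def x1_def y0_def y1_def algebra_simps)
    ultimately have "M * (density (insert y Y) a A + density (insert y Y) b B) \<le> M"
      using mult_left_le[of "x0 + y1" "real b"] mult_left_le[of "x1 + y0" "real a"] by linarith
    moreover have "0 < M"
      by (simp add: M_def card)
    ultimately show ?thesis
      by (simp add: mult_le_cancel_left1)
  qed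
qed

lemma complements_subsets_of_card:
  assumes "finite Y" "A \<subseteq> subsets_of_card Y a"
  shows "(\<lambda>S. Y - S) ` A \<subseteq> subsets_of_card Y (card Y - a)"
    and "density Y (card Y - a) ((\<lambda>S. Y - S) ` A) = density Y a A"
proof -
  show "(\<lambda>S. Y - S) ` A \<subseteq> subsets_of_card Y (card Y - a)"
  proof (rule image_subsetI)
    fix S assume "S \<in> A"
    then have "S \<subseteq> Y" "card S = a"
      using assms(2) by (auto simp: subsets_of_card_def)
    then show "Y - S \<in> subsets_of_card Y (card Y - a)"
      using assms(1) by (simp add: subsets_of_card_def card_Diff_subset finite_subset)
  qed
  have "inj_on (\<lambda>S. Y - S) A"
    using assms(2) unfolding inj_on_def subsets_of_card_def by blast
  moreover have "a \<le> card Y" if "A \<noteq> {}"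
    using that assms by (auto simp: subsets_of_card_def intro: card_mono)
  ultimately show "density Y (card Y - a) ((\<lambda>S. Y - S) ` A) = density Y a A"
    by (cases "A = {}") (auto simp: density_def card_image binomial_symmetric[symmetric])
qed

lemma non_covering_density_le_1:
  fixes Y :: "nat set"
  assumes "finite Y" "A \<subseteq> subsets_of_card Y a" "B \<subseteq> subsets_of_card Y b"
    and "card Y \<le> a + b"
    and non_covering: "\<And>S T. S \<in> A \<Longrightarrow> T \<in> B \<Longrightarrow> S \<union> T \<noteq> Y"
  shows "density Y a A + density Y b B \<le> 1"
proof -
  have "cross_intersecting ((\<lambda>S. Y - S) ` A) ((\<lambda>S. Y - S) ` B)"
    using assms(2,3) non_covering
    by (fastforce simp: cross_intersecting_def subsets_of_card_def)
  then have "density Y (card Y - a) ((\<lambda>S. Y - S) ` A)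
      + density Y (card Y - b) ((\<lambda>S. Y - S) ` B) \<le> 1"
    using assms(1,4) complements_subsets_of_card(1)[OF assms(1)] assms(2,3)
    by (intro cross_intersecting_density_le_1) auto
  then show ?thesis
    using complements_subsets_of_card(2)[OF assms(1)] assms(2,3) by simp
qed

lemma restr_subsets_of_card:
  assumes "H \<subseteq> ksets n k" "X \<subseteq> {1..k+1}"
  shows "restr k H X \<subseteq> subsets_of_card {k+2..n} (k - card X)"
proof
  fix S assume "S \<in> restr k H X"
  then obtain A where A: "A \<in> H" "A \<inter> {1..k+1} = X" "S = A - X"
    by (auto simp: restr_def)
  moreover have "A \<subseteq> {1..n}" "card A = k"
    using A(1) assms(1) by (auto simp: ksets_def)
  moreover have "finite X"
    using assms(2) finite_subset by blast
  ultimately show "S \<in> subsets_of_card {k+2..n} (k - card X)"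
    by (auto simp: subsets_of_card_def card_Diff_subset)
qed

lemma cross_intersecting_restr:
  assumes "cross_intersecting F G" "P \<inter> Q = {}"
  shows "cross_intersecting (restr k F P) (restr k G Q)"
  using assms unfolding cross_intersecting_def restr_def by blast

lemma restr_Un_neq:
  assumes "2 * k \<le> n" "initial n k F" "G \<subseteq> ksets n k" "cross_intersecting F G"
    and "P \<subseteq> {1..k+1}" "Q \<subseteq> {1..k+1}" "P \<inter> Q = {}"
    and S: "S \<in> restr k F P" and T: "T \<in> restr k G Q"
  shows "S \<union> T \<noteq> {k+2..n}"
proof
  assume cover: "S \<union> T = {k+2..n}"
  obtain A B where A: "A \<in> F" "A \<inter> {1..k+1} = P" "S = A - P"
    and B: "B \<in> G" "B \<inter> {1..k+1} = Q" "T = B - Q"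
    using S T by (auto simp: restr_def)
  have "F \<subseteq> ksets n k"
    using assms(2) by (simp add: initial_def)
  have "S \<in> subsets_of_card {k+2..n} (k - card P)" "T \<in> subsets_of_card {k+2..n} (k - card Q)"
    using restr_subsets_of_card[OF \<open>F \<subseteq> ksets n k\<close> assms(5)]
      restr_subsets_of_card[OF assms(3,6)] S T by blast+
  then have cards: "card S = k - card P" "card T = k - card Q" "finite S" "finite T"
    by (auto simp: subsets_of_card_def intro: finite_subset)
  have card_trace: "card (X \<inter> {1..k+1}) \<le> k" if "X \<in> ksets n k" for X
    using that card_mono[OF _ Int_lower1, of X "{1..k+1}"]
    by (auto simp: ksets_def intro: finite_subset)
  have "card P \<le> k" "card Q \<le> k"
    using card_trace[of A] card_trace[of B] A(1,2) B(1,2) \<open>F \<subseteq> ksets n k\<close> assms(3) by auto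
  have "A \<inter> B = S \<inter> T"
    using A B assms(7) by blast
  then have common: "card (A \<inter> B) = (k - card P) + (k - card Q) - (n - k - 1)"
    using card_Un_Int[OF cards(3,4)] cover cards(1,2) by simp
  have "{1..k+1} - (A \<union> B) = {1..k+1} - (P \<union> Q)"
    using A(2) B(2) by blast
  moreover have "card (P \<union> Q) = card P + card Q"
    using assms(5-7) by (simp add: card_Un_disjoint finite_subset)
  ultimately have free: "card ({1..k+1} - (A \<union> B)) = k + 1 - (card P + card Q)"
    using assms(5,6) by (simp add: card_Diff_subset finite_subset)
  have "A \<inter> B \<subseteq> {k+2..n}"
    using \<open>A \<inter> B = S \<inter> T\<close> cover by blast
  then have "card ({1..k+1} - (A \<union> B)) < card (A \<inter> B)"
    by (intro initial_cross_intersecting_card_Int[OF assms(2,4) A(1) B(1)]) auto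
  then show False
    unfolding free common using assms(1) \<open>card P \<le> k\<close> \<open>card Q \<le> k\<close> by linarith
qed

theorem claim3p1:
  fixes n k :: nat and F G :: "nat set set" and P Q :: "nat set"
  assumes "n \<ge> 2 * k" and "2 * k \<ge> 4"
    and "F \<subseteq> ksets n k" and "G \<subseteq> ksets n k"
    and "nontrivial F" and "nontrivial G"
    and "cross_intersecting F G"
    and "initial n k F" and "initial n k G"
    and "P \<subseteq> {1..k+1}" and "Q \<subseteq> {1..k+1}" and "P \<inter> Q = {}"
    and "2 \<le> card P" and "card P \<le> k" and "2 \<le> card Q" and "card Q \<le> k"
  shows "dens n k F P + dens n k G Q \<le> 1"
proof -
  let ?Y = "{k+2..n}"
  note sub = restr_subsets_of_card[OF assms(3,10)] restr_subsets_of_card[OF assms(4,11)]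
  have "density ?Y (k - card P) (restr k F P) + density ?Y (k - card Q) (restr k G Q) \<le> 1"
  proof (cases "(k - card P) + (k - card Q) \<le> card ?Y")
    case True
    then show ?thesis
      using sub assms(7,12) cross_intersecting_restr
      by (intro cross_intersecting_density_le_1) auto
  next
    case False
    then show ?thesis
      using sub restr_Un_neq[OF assms(1,8,4,7,10,11,12)]
      by (intro non_covering_density_le_1) auto
  qed
  then show ?thesis
    by (simp add: dens_def density_def)
qed

end
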